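(* Let $K$ be either an $N$-gon or a star-like tree, with $N$ vertices, and let $z\in\mathbb{R}^N$ be such that the persistence diagram $\mathrm{PH}_0(z)=\{(p_m^b,p_m^d)\}_{m=1}^M$ is typical. Then there is a typical point $z'\in\mathbb{R}^N$ with $\mathrm{PH}_0(z')=\mathrm{PH}_0(z)$.
   Context: The $N$-gon has vertices $\mathbb{Z}/N$ and edges $[i,i+1]$. A star-like tree is a tree with a central vertex of degree $n$ which is the union of $n$ paths (branches) of length at least $2$ meeting only at the central vertex. Vertices of $K$ are labelled $1,\dots,N$, and $z\in\mathbb{R}^N$ is viewed as a function on vertices extended to edges by the maximum over endpoints. $K_r(z)$ is the subcomplex of vertices $i$ with $z_i\le r$ and edges $[i,j]$ with $\max\{z_i,z_j\}\le r$; $\mathrm{PH}_0(z)$ is the degree-$0$ persistence diagram (multiset of (birth, death) pairs, death possibly $\infty$) of the filtration $r\mapsto K_r(z)$. A persistence diagram is typical if the (finite) coordinates of its points are pairwise distinct; a point $z\in\mathbb{R}^N$ is typical if its coordinates are pairwise distinct. *)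

theory Defs
  imports Complex_Main "HOL-Library.Multiset" "HOL-Library.Extended_Real"
begin

text \<open>A graph (1-dimensional simplicial complex) is given by its vertex set V
  and its edge set E (a set of 2-element vertex sets).\<close>

definition ngon_edges :: "nat \<Rightarrow> nat set set" where
  "ngon_edges N = {{i, i + 1} | i. 1 \<le> i \<and> i < N} \<union> {{N, 1}}"

definition is_ngon :: "nat \<Rightarrow> nat set set \<Rightarrow> bool" where
  "is_ngon N E \<longleftrightarrow> N \<ge> 3 \<and> E = ngon_edges N"

text \<open>Edges of the path c - b!0 - b!1 - ... - b!(k-1).\<close>
definition branch_edges :: "nat \<Rightarrow> nat list \<Rightarrow> nat set set" where
  "branch_edges c b = set (map2 (\<lambda>u v. {u, v}) (c # b) b)"

text \<open>Star-like tree on vertices 1..N: centre c, branches bs (each a path of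
  length (number of edges) at least 2 starting at c), meeting only at c.\<close>
definition is_starlike :: "nat \<Rightarrow> nat set set \<Rightarrow> bool" where
  "is_starlike N E \<longleftrightarrow> (\<exists>c bs.
     c \<in> {1..N} \<and>
     (\<forall>b\<in>set bs. length b \<ge> 2 \<and> distinct b \<and> c \<notin> set b) \<and>
     (\<forall>i<length bs. \<forall>j<length bs. i \<noteq> j \<longrightarrow> set (bs ! i) \<inter> set (bs ! j) = {}) \<and>
     {1..N} = insert c (\<Union>b\<in>set bs. set b) \<and>
     E = (\<Union>b\<in>set bs. branch_edges c b))"

text \<open>Sublevel subcomplex: vertices / edges whose (max of) values satisfy P
  (P = (\<lambda>x. x \<le> r) gives K_r; P = (\<lambda>x. x < r) gives the union of K_s, s < r).\<close>
definition sub_V :: "nat set \<Rightarrow> (nat \<Rightarrow> real) \<Rightarrow> (real \<Rightarrow> bool) \<Rightarrow> nat set" where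
  "sub_V V z P = {v \<in> V. P (z v)}"

definition sub_E :: "nat set set \<Rightarrow> (nat \<Rightarrow> real) \<Rightarrow> (real \<Rightarrow> bool) \<Rightarrow> nat set set" where
  "sub_E E z P = {e \<in> E. \<forall>v\<in>e. P (z v)}"

definition comp :: "nat set set \<Rightarrow> (nat \<Rightarrow> real) \<Rightarrow> (real \<Rightarrow> bool) \<Rightarrow> nat \<Rightarrow> nat set" where
  "comp E z P v = {w. (v, w) \<in> {(a, b). {a, b} \<in> sub_E E z P}\<^sup>*}"

text \<open>Rank of the map H_0(K_P) \<rightarrow> H_0(K_Q) induced by inclusion (P implies Q):
  number of components of K_Q meeting K_P.\<close>
definition rk :: "nat set \<Rightarrow> nat set set \<Rightarrow> (nat \<Rightarrow> real) \<Rightarrow> (real \<Rightarrow> bool) \<Rightarrow> (real \<Rightarrow> bool) \<Rightarrow> int" where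
  "rk V E z P Q = int (card (comp E z Q ` sub_V V z P))"

text \<open>Multiplicity of the finite point (b,d), b < d, in PH_0 (inclusion-exclusion
  of ranks of the persistence module).\<close>
definition mult_fin :: "nat set \<Rightarrow> nat set set \<Rightarrow> (nat \<Rightarrow> real) \<Rightarrow> real \<Rightarrow> real \<Rightarrow> int" where
  "mult_fin V E z b d =
     rk V E z (\<lambda>x. x \<le> b) (\<lambda>x. x < d) - rk V E z (\<lambda>x. x < b) (\<lambda>x. x < d)
   - rk V E z (\<lambda>x. x \<le> b) (\<lambda>x. x \<le> d) + rk V E z (\<lambda>x. x < b) (\<lambda>x. x \<le> d)"

definition mult_inf :: "nat set \<Rightarrow> nat set set \<Rightarrow> (nat \<Rightarrow> real) \<Rightarrow> real \<Rightarrow> int" where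
  "mult_inf V E z b =
     rk V E z (\<lambda>x. x \<le> b) (\<lambda>x. True) - rk V E z (\<lambda>x. x < b) (\<lambda>x. True)"

text \<open>Degree-0 persistence diagram of the sublevel filtration r \<mapsto> K_r(z)
  (off-diagonal points, as a multiset; all coordinates are values of z).\<close>
definition PH0 :: "nat set \<Rightarrow> nat set set \<Rightarrow> (nat \<Rightarrow> real) \<Rightarrow> (real \<times> ereal) multiset" where
  "PH0 V E z =
     (\<Sum>b\<in>z ` V. \<Sum>d\<in>z ` V.
        if b < d then replicate_mset (nat (mult_fin V E z b d)) (b, ereal d) else {#})
   + (\<Sum>b\<in>z ` V. replicate_mset (nat (mult_inf V E z b)) (b, PInfty))"

definition diag_coords :: "(real \<times> ereal) multiset \<Rightarrow> real multiset" where
  "diag_coords D = (\<Sum>p\<in>#D. {#fst p#} +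
      (if snd p = PInfty then {#} else {#real_of_ereal (snd p)#}))"

definition typical_diagram :: "(real \<times> ereal) multiset \<Rightarrow> bool" where
  "typical_diagram D \<longleftrightarrow> (\<forall>x. count (diag_coords D) x \<le> 1)"

definition typical_point :: "nat \<Rightarrow> (nat \<Rightarrow> real) \<Rightarrow> bool" where
  "typical_point N z \<longleftrightarrow> inj_on z {1..N}"

end

theory Submission
  imports Defs "HOL-Analysis.Elementary_Metric_Spaces"
begin

text \<open>
  Induct on the number of ties of \<open>z\<close>. Let \<open>t\<close> be a value taken at two vertices and put
  \<open>X = K(\<le>t)\<close>, \<open>Z = K(<t)\<close>. The coordinate \<open>t\<close> occurs in \<open>PH0(z)\<close> at least
  (births at \<open>t\<close>) + (deaths at \<open>t\<close>) times, and this number equals the sum, over the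
  components \<open>C\<close> of \<open>X\<close>, of \<open>|k(C) - 1|\<close>, where \<open>k(C)\<close> counts the components of \<open>Z\<close> inside \<open>C\<close>.
  Typicality bounds it by 1. Since at least two vertices of \<open>X - Z\<close> are tied at \<open>t\<close>, a
  combinatorial argument (via a vertex farthest from a connected set, which is never a cut vertex)
  yields a vertex \<open>v\<close> of \<open>X - Z\<close> that joins exactly one component either of \<open>X - {v}\<close> or of \<open>Z\<close>.
  Raising \<open>z v\<close> slightly in the first case, lowering it in the second, creates a new level at
  which \<open>v\<close> is added without changing any component; so all ranks of the persistence module at
  the old levels are unchanged, the new level carries no point, and \<open>PH0\<close> is preserved while the
  number of distinct values increases. Nothing about \<open>N\<close>-gons or star-like trees is used beyond
  \<open>K\<close> being a finite graph.
\<close>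

definition induced_adj :: "'a set set \<Rightarrow> 'a set \<Rightarrow> 'a rel" where
  "induced_adj E U = {(a, b). {a, b} \<in> E \<and> a \<in> U \<and> b \<in> U}"

definition component :: "'a set set \<Rightarrow> 'a set \<Rightarrow> 'a \<Rightarrow> 'a set" where
  "component E U a = {b. (a, b) \<in> (induced_adj E U)\<^sup>*}"

text \<open>For \<open>A \<subseteq> B\<close>: the rank of the map \<open>H\<^sub>0(A) \<rightarrow> H\<^sub>0(B)\<close> induced by the inclusion.\<close>

definition h0_rank :: "'a set set \<Rightarrow> 'a set \<Rightarrow> 'a set \<Rightarrow> int" where
  "h0_rank E A B = int (card (component E B ` A))"

lemma sym_induced_adj: "sym (induced_adj E U)"
  by (auto simp: sym_def induced_adj_def insert_commute)

lemma induced_adj_mono: "U \<subseteq> U' \<Longrightarrow> induced_adj E U \<subseteq> induced_adj E U'"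
  by (auto simp: induced_adj_def)

lemma rtrancl_induced_adj_mono:
  "U \<subseteq> U' \<Longrightarrow> (a, b) \<in> (induced_adj E U)\<^sup>* \<Longrightarrow> (a, b) \<in> (induced_adj E U')\<^sup>*"
  using rtrancl_mono[OF induced_adj_mono] by blast

lemma rtrancl_induced_adj_sym:
  "(a, b) \<in> (induced_adj E U)\<^sup>* \<Longrightarrow> (b, a) \<in> (induced_adj E U)\<^sup>*"
  by (rule symD[OF sym_rtrancl[OF sym_induced_adj]])

lemma component_self: "a \<in> component E U a"
  by (simp add: component_def)

lemma component_eq_iff:
  "component E U a = component E U b \<longleftrightarrow> (a, b) \<in> (induced_adj E U)\<^sup>*"
proof
  assume "component E U a = component E U b"
  then have "b \<in> component E U a"
    by (metis component_self)
  then show "(a, b) \<in> (induced_adj E U)\<^sup>*"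
    by (simp add: component_def)
next
  assume "(a, b) \<in> (induced_adj E U)\<^sup>*"
  then show "component E U a = component E U b"
    unfolding component_def
    by (auto intro: rtrancl_trans dest: rtrancl_induced_adj_sym)
qed

lemma component_eq: "b \<in> component E U a \<Longrightarrow> component E U b = component E U a"
  by (metis component_def component_eq_iff mem_Collect_eq)

lemma component_subset: "a \<in> U \<Longrightarrow> component E U a \<subseteq> U"
proof
  fix b assume "a \<in> U" "b \<in> component E U a"
  then have "(a, b) \<in> (induced_adj E U)\<^sup>*"
    by (simp add: component_def)
  then show "b \<in> U"
    using \<open>a \<in> U\<close> by induction (auto simp: induced_adj_def)
qed

lemma component_edge:
  assumes "b \<in> component E U a" "{b, c} \<in> E" "b \<in> U" "c \<in> U"
  shows "c \<in> component E U a"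
proof -
  have "(b, c) \<in> induced_adj E U"
    using assms(2-4) by (simp add: induced_adj_def)
  then show ?thesis
    using assms(1) by (auto simp: component_def)
qed

lemma component_mono: "U \<subseteq> U' \<Longrightarrow> component E U a \<subseteq> component E U' a"
  by (auto simp: component_def intro: rtrancl_induced_adj_mono)

lemma rtrancl_enters:
  assumes "(a, b) \<in> R\<^sup>*" "a \<notin> A" "b \<in> A"
  shows "\<exists>c d. (a, c) \<in> R\<^sup>* \<and> (c, d) \<in> R \<and> c \<notin> A \<and> d \<in> A"
  using assms(1,3)
proof (induction rule: rtrancl_induct)
  case base
  then show ?case using assms(2) by simp
next
  case (step y z)
  then show ?case by (cases "y \<in> A") auto
qed

text \<open>Adding \<open>v\<close> to \<open>W\<close> neither creates nor merges components.\<close>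

definition joins_one_component :: "'a set set \<Rightarrow> 'a set \<Rightarrow> 'a \<Rightarrow> bool" where
  "joins_one_component E W v \<longleftrightarrow> v \<notin> W \<and> (\<exists>w\<in>W. {v, w} \<in> E) \<and>
     (\<forall>w1\<in>W. \<forall>w2\<in>W. {v, w1} \<in> E \<longrightarrow> {v, w2} \<in> E \<longrightarrow> component E W w1 = component E W w2)"

lemma rtrancl_insert_joining:
  assumes join: "joins_one_component E W v" and path: "(a, b) \<in> (induced_adj E (insert v W))\<^sup>*"
    and a: "a \<in> W" and b: "b \<in> W"
  shows "(a, b) \<in> (induced_adj E W)\<^sup>*"
proof -
  have "(b \<in> W \<longrightarrow> (a, b) \<in> (induced_adj E W)\<^sup>*) \<and>
        (b = v \<longrightarrow> (\<exists>w\<in>W. {v, w} \<in> E \<and> (a, w) \<in> (induced_adj E W)\<^sup>*))"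
    using path
  proof (induction rule: rtrancl_induct)
    case base
    then show ?case using a join by (auto simp: joins_one_component_def)
  next
    case (step y y')
    then have edge: "{y, y'} \<in> E" "y \<in> insert v W" "y' \<in> insert v W"
      by (auto simp: induced_adj_def)
    have vW: "v \<notin> W"
      using join by (simp add: joins_one_component_def)
    show ?case
    proof (cases "y \<in> W")
      case True
      then have "(a, y) \<in> (induced_adj E W)\<^sup>*"
        using step.IH by simp
      moreover have "y' \<in> W \<Longrightarrow> (y, y') \<in> induced_adj E W"
        using edge True by (simp add: induced_adj_def)
      moreover have "y' = v \<Longrightarrow> {v, y} \<in> E"
        using edge by (simp add: insert_commute)
      ultimately show ?thesis
        using True vW by (meson rtrancl.rtrancl_into_rtrancl)
    next
      case False
      then have "y = v"
        using edge by simp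
      then obtain w where w: "w \<in> W" "{v, w} \<in> E" "(a, w) \<in> (induced_adj E W)\<^sup>*"
        using step.IH by auto
      have "y' \<in> W \<Longrightarrow> (w, y') \<in> (induced_adj E W)\<^sup>*"
        using join w edge \<open>y = v\<close> by (auto simp: joins_one_component_def component_eq_iff)
      then show ?thesis
        using w vW by (meson rtrancl_trans)
    qed
  qed
  then show ?thesis
    using b by blast
qed

lemma card_image_eq_if_same_fibres:
  assumes "\<And>a b. a \<in> D \<Longrightarrow> b \<in> D \<Longrightarrow> f a = f b \<longleftrightarrow> g a = g b"
  shows "card (f ` D) = card (g ` D)"
proof -
  define h where "h y = f (inv_into D g y)" for y
  have "h (g a) = f a" if "a \<in> D" for a
    using assms that inv_into_into[of "g a" g D] f_inv_into_f[of "g a" g D] by (simp add: h_def)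
  then have "bij_betw h (g ` D) (f ` D)"
    using assms by (auto simp: bij_betw_def inj_on_def image_iff)
  then show ?thesis
    by (simp add: bij_betw_same_card)
qed

lemma h0_rank_insert_right:
  assumes "joins_one_component E W v" "A \<subseteq> W"
  shows "h0_rank E A (insert v W) = h0_rank E A W"
proof -
  have "component E (insert v W) a = component E (insert v W) b \<longleftrightarrow> component E W a = component E W b"
    if "a \<in> A" "b \<in> A" for a b
  proof -
    have "a \<in> W" "b \<in> W"
      using that assms(2) by auto
    then show ?thesis
      unfolding component_eq_iff
      using rtrancl_insert_joining[OF assms(1) _ \<open>a \<in> W\<close> \<open>b \<in> W\<close>]
        rtrancl_induced_adj_mono[OF subset_insertI, of a b E W v] by blast
  qed
  then have "card (component E (insert v W) ` A) = card (component E W ` A)"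
    by (rule card_image_eq_if_same_fibres)
  then show ?thesis
    by (simp add: h0_rank_def)
qed

lemma h0_rank_insert_left:
  assumes "joins_one_component E W v" "insert v W \<subseteq> B"
  shows "h0_rank E (insert v W) B = h0_rank E W B"
proof -
  obtain w where w: "w \<in> W" "{v, w} \<in> E"
    using assms(1) by (auto simp: joins_one_component_def)
  then have "(v, w) \<in> induced_adj E B"
    using assms(2) by (auto simp: induced_adj_def)
  then have "component E B v = component E B w"
    by (simp add: component_eq_iff)
  then show ?thesis
    using w by (simp add: h0_rank_def insert_absorb)
qed

definition eq_up_to_insert :: "'a set \<Rightarrow> 'a \<Rightarrow> 'a set \<Rightarrow> 'a set \<Rightarrow> bool" where
  "eq_up_to_insert W v A A' \<longleftrightarrow> A' = A \<or> A \<in> {W, insert v W} \<and> A' \<in> {W, insert v W}"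

lemma h0_rank_eq_up_to_insert:
  assumes join: "joins_one_component E W v"
    and AB: "A \<subseteq> B" and AB': "A' \<subseteq> B'"
    and A: "eq_up_to_insert W v A A'" and B: "eq_up_to_insert W v B B'"
  shows "h0_rank E A' B' = h0_rank E A B"
proof -
  have v: "\<not> insert v W \<subseteq> W"
    using join by (simp add: joins_one_component_def)
  note right = h0_rank_insert_right[OF join] and left = h0_rank_insert_left[OF join]
  have WW: "h0_rank E (insert v W) (insert v W) = h0_rank E W W"
    using left[of "insert v W"] right[of W] by simp
  from A[unfolded eq_up_to_insert_def] show ?thesis
  proof
    assume "A' = A"
    from B[unfolded eq_up_to_insert_def] show ?thesis
    proof
      assume "B \<in> {W, insert v W} \<and> B' \<in> {W, insert v W}"
      then show ?thesis
        using \<open>A' = A\<close> AB AB' right by auto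
    qed (simp add: \<open>A' = A\<close>)
  next
    assume A2: "A \<in> {W, insert v W} \<and> A' \<in> {W, insert v W}"
    from B[unfolded eq_up_to_insert_def] show ?thesis
    proof
      assume "B' = B"
      then show ?thesis
        using A2 AB AB' left by auto
    next
      assume "B \<in> {W, insert v W} \<and> B' \<in> {W, insert v W}"
      then show ?thesis
        using A2 AB AB' v WW right[of W] by auto
    qed
  qed
qed

definition hop_dist :: "'a rel \<Rightarrow> 'a set \<Rightarrow> 'a \<Rightarrow> nat" where
  "hop_dist R S y = (LEAST n. \<exists>r\<in>S. (r, y) \<in> R ^^ n)"

lemma hop_dist_reach:
  assumes "y \<in> R\<^sup>* `` S"
  shows "\<exists>r\<in>S. (r, y) \<in> R ^^ hop_dist R S y"
proof -
  have "\<exists>n. \<exists>r\<in>S. (r, y) \<in> R ^^ n"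
    using assms unfolding Image_iff rtrancl_power by blast
  then show ?thesis
    unfolding hop_dist_def by (rule LeastI_ex)
qed

lemma hop_dist_le: "r \<in> S \<Longrightarrow> (r, y) \<in> R ^^ n \<Longrightarrow> hop_dist R S y \<le> n"
  unfolding hop_dist_def by (blast intro: Least_le)

lemma rtrancl_avoiding_farthest:
  assumes farthest: "\<And>y. y \<in> R\<^sup>* `` S - S \<Longrightarrow> hop_dist R S y \<le> hop_dist R S x"
  shows "R\<^sup>* `` S - {x} \<subseteq> {(a, b) \<in> R. a \<noteq> x \<and> b \<noteq> x}\<^sup>* `` S"
proof -
  define R' where "R' = {(a, b) \<in> R. a \<noteq> x \<and> b \<noteq> x}"
  have "y \<in> R'\<^sup>* `` S" if "y \<in> R\<^sup>* `` S - {x}" "hop_dist R S y = n" for y n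
    using that
  proof (induction n arbitrary: y)
    case 0
    then have "y \<in> R\<^sup>* `` S"
      by simp
    from hop_dist_reach[OF this] 0 have "y \<in> S"
      by auto
    then show ?case
      by auto
  next
    case (Suc n)
    have "y \<in> R\<^sup>* `` S"
      using Suc.prems by simp
    from hop_dist_reach[OF this] Suc.prems(2)
    obtain r y' where r: "r \<in> S" "(r, y') \<in> R ^^ n" and y'y: "(y', y) \<in> R"
      by (auto elim: relpow_Suc_E)
    have y': "y' \<in> R\<^sup>* `` S"
      using r by (auto intro: relpow_imp_rtrancl)
    obtain r' where "r' \<in> S" "(r', y') \<in> R ^^ hop_dist R S y'"
      using hop_dist_reach[OF y'] by blast
    then have "hop_dist R S y \<le> Suc (hop_dist R S y')"
      using y'y hop_dist_le by (meson relpow_Suc_I)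
    then have dy': "hop_dist R S y' = n"
      using hop_dist_le[OF r] Suc.prems(2) by simp
    have "y \<notin> S"
      using hop_dist_le[where n = 0 and r = y and y = y] Suc.prems(2) by auto
    then have "y' \<noteq> x"
      using farthest[of y] Suc.prems dy' by auto
    then have "y' \<in> R'\<^sup>* `` S"
      using Suc.IH y' dy' by blast
    moreover have "(y', y) \<in> R'"
      using y'y \<open>y' \<noteq> x\<close> Suc.prems(1) by (simp add: R'_def)
    ultimately show ?case
      by (meson Image_iff rtrancl.rtrancl_into_rtrancl)
  qed
  then show ?thesis
    unfolding R'_def by blast
qed

lemma exists_far_vertex:
  fixes R :: "'a rel"
  assumes fin: "finite (R\<^sup>* `` S)" and far: "\<not> R\<^sup>* `` S \<subseteq> S"
  obtains x where "x \<in> R\<^sup>* `` S - S"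
    and "R\<^sup>* `` S - {x} \<subseteq> {(a, b) \<in> R. a \<noteq> x \<and> b \<noteq> x}\<^sup>* `` S"
proof -
  define C where "C = R\<^sup>* `` S - S"
  have fin_d: "finite (hop_dist R S ` C)" and "hop_dist R S ` C \<noteq> {}"
    using fin far by (auto simp: C_def)
  then have "Max (hop_dist R S ` C) \<in> hop_dist R S ` C"
    by (rule Max_in)
  then obtain x where x: "x \<in> C" and "hop_dist R S x = Max (hop_dist R S ` C)"
    by auto
  then have "hop_dist R S y \<le> hop_dist R S x" if "y \<in> R\<^sup>* `` S - S" for y
    using fin_d that by (simp add: C_def)
  then have "R\<^sup>* `` S - {x} \<subseteq> {(a, b) \<in> R. a \<noteq> x \<and> b \<noteq> x}\<^sup>* `` S"
    by (rule rtrancl_avoiding_farthest)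
  with x show thesis
    unfolding C_def by (rule that)
qed

lemma joins_one_component_removeI:
  assumes x: "x \<in> X" and c: "c \<in> component E X x - {x}"
    and hub: "\<And>y. y \<in> component E X x - {x} \<Longrightarrow> (c, y) \<in> (induced_adj E (X - {x}))\<^sup>*"
  shows "joins_one_component E (X - {x}) x"
proof -
  have "(x, c) \<in> (induced_adj E X)\<^sup>*"
    using c by (simp add: component_def)
  then obtain a b where "(a, b) \<in> induced_adj E X" "a \<notin> - {x}" "b \<in> - {x}"
    using rtrancl_enters[of x c "induced_adj E X" "- {x}"] c by auto
  then have nbr: "\<exists>w\<in>X - {x}. {x, w} \<in> E"
    by (auto simp: induced_adj_def)
  have "component E (X - {x}) w = component E (X - {x}) c"
    if "w \<in> X - {x}" "{x, w} \<in> E" for w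
  proof -
    have "w \<in> component E X x"
      using that x component_self[of x E X] component_edge[of x E X x w] by simp
    then show ?thesis
      using that rtrancl_induced_adj_sym[OF hub] by (simp add: component_eq_iff)
  qed
  then show ?thesis
    unfolding joins_one_component_def using nbr by blast
qed

lemma exists_non_cut_vertex:
  assumes fin: "finite X" and c: "c \<in> X"
    and R0: "R0 \<subseteq> component E X c" "component E X c \<noteq> R0"
    and r0: "r0 \<in> R0" and Y: "R0 \<subseteq> component E Y r0" "Y \<subseteq> X" "Y \<inter> (component E X c - R0) = {}"
  shows "\<exists>x\<in>component E X c - R0. joins_one_component E (X - {x}) x"
proof -
  define C where "C = component E X c"
  define R where "R = induced_adj E X"
  have C_eq: "C = R\<^sup>* `` R0"
  proof
    have "component E X r0 = C"
      using r0 R0(1) component_eq by (fastforce simp: C_def)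
    then show "C \<subseteq> R\<^sup>* `` R0"
      using r0 by (auto simp: R_def component_def)
    show "R\<^sup>* `` R0 \<subseteq> C"
      using R0(1) by (auto simp: C_def R_def component_def intro: rtrancl_trans)
  qed
  have "finite C"
    using component_subset[OF c] fin by (auto simp: C_def intro: finite_subset)
  moreover have "\<not> C \<subseteq> R0"
    using R0 by (auto simp: C_def)
  ultimately obtain x where x: "x \<in> C - R0"
    and avoid: "C - {x} \<subseteq> {(a, b) \<in> R. a \<noteq> x \<and> b \<noteq> x}\<^sup>* `` R0"
    using exists_far_vertex[of R R0] unfolding C_eq by blast
  have R_x: "{(a, b) \<in> R. a \<noteq> x \<and> b \<noteq> x} = induced_adj E (X - {x})"
    by (auto simp: R_def induced_adj_def)
  have "Y \<subseteq> X - {x}"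
    using Y x by (auto simp: C_def)
  then have R0_conn: "(r0, r) \<in> (induced_adj E (X - {x}))\<^sup>*" if "r \<in> R0" for r
    using Y(1) that by (auto simp: component_def intro: rtrancl_induced_adj_mono)
  have hub: "(r0, y) \<in> (induced_adj E (X - {x}))\<^sup>*" if y: "y \<in> C - {x}" for y
  proof -
    obtain r where "r \<in> R0" "(r, y) \<in> (induced_adj E (X - {x}))\<^sup>*"
      using avoid y R_x by auto
    then show ?thesis
      using R0_conn rtrancl_trans by metis
  qed
  have "component E X x = C"
    using x by (simp add: C_def component_eq)
  moreover have "x \<in> X"
    using x component_subset[OF c] by (auto simp: C_def)
  moreover have "r0 \<in> C - {x}"
    using r0 R0(1) x by (auto simp: C_def)
  ultimately have "joins_one_component E (X - {x}) x"
    using joins_one_component_removeI[of x X r0 E] hub by simp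
  then show ?thesis
    using x by (auto simp: C_def)
qed

definition subcomponents :: "'a set set \<Rightarrow> 'a set \<Rightarrow> 'a set \<Rightarrow> 'a set set" where
  "subcomponents E Z C = component E Z ` (Z \<inter> C)"

lemma component_eq_of_mem:
  assumes "C \<in> component E X ` X" "w \<in> C"
  shows "component E X w = C"
proof -
  obtain x where "C = component E X x"
    using assms(1) by blast
  then show ?thesis
    using component_eq[of w E X x] assms(2) by simp
qed

lemma card_components_eq_sum_subcomponents:
  assumes fin: "finite X" and ZX: "Z \<subseteq> X"
  shows "card (component E Z ` Z) = (\<Sum>C\<in>component E X ` X. card (subcomponents E Z C))"
proof -
  have union: "component E Z ` Z = (\<Union>C\<in>component E X ` X. subcomponents E Z C)"
  proof
    show "component E Z ` Z \<subseteq> (\<Union>C\<in>component E X ` X. subcomponents E Z C)"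
    proof
      fix S assume "S \<in> component E Z ` Z"
      then obtain w where w: "w \<in> Z" "S = component E Z w"
        by blast
      then have "component E X w \<in> component E X ` X" "w \<in> Z \<inter> component E X w"
        using ZX component_self[of w E X] by auto
      then show "S \<in> (\<Union>C\<in>component E X ` X. subcomponents E Z C)"
        using w by (auto simp: subcomponents_def)
    qed
    show "(\<Union>C\<in>component E X ` X. subcomponents E Z C) \<subseteq> component E Z ` Z"
      by (auto simp: subcomponents_def)
  qed
  have disjoint: "subcomponents E Z C \<inter> subcomponents E Z C' = {}"
    if "C \<in> component E X ` X" "C' \<in> component E X ` X" "C \<noteq> C'" for C C'
  proof (rule ccontr)
    assume "subcomponents E Z C \<inter> subcomponents E Z C' \<noteq> {}"
    then obtain w w' where w: "w \<in> C" "w' \<in> C'" "component E Z w = component E Z w'"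
      by (auto simp: subcomponents_def)
    then have "(w, w') \<in> (induced_adj E Z)\<^sup>*"
      by (simp add: component_eq_iff)
    then have "(w, w') \<in> (induced_adj E X)\<^sup>*"
      by (rule rtrancl_induced_adj_mono[OF ZX])
    then have "component E X w = component E X w'"
      by (simp add: component_eq_iff)
    then show False
      using component_eq_of_mem[OF that(1) w(1)] component_eq_of_mem[OF that(2) w(2)] that(3) by simp
  qed
  have "finite (subcomponents E Z C)" for C
    using finite_subset[OF ZX fin] by (simp add: subcomponents_def)
  then have "card (\<Union>C\<in>component E X ` X. subcomponents E Z C)
      = (\<Sum>C\<in>component E X ` X. card (subcomponents E Z C))"
    using fin disjoint by (intro card_UN_disjoint) auto
  then show ?thesis
    unfolding union .
qed

text \<open>For \<open>X = K(\<le>t)\<close> and \<open>Z = K(<t)\<close> the left-hand side counts the components born at \<open>t\<close>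
  plus those dying at \<open>t\<close>.\<close>

lemma births_plus_deaths_eq:
  assumes fin: "finite X" and ZX: "Z \<subseteq> X"
  shows "(h0_rank E X X - h0_rank E Z X) + (h0_rank E Z Z - h0_rank E Z X)
       = (\<Sum>C\<in>component E X ` X. \<bar>int (card (subcomponents E Z C)) - 1\<bar>)"
proof -
  define K where "K = component E X ` X"
  define k where "k C = card (subcomponents E Z C)" for C
  have finK: "finite K"
    using fin by (simp add: K_def)
  have k_pos: "0 < k C \<longleftrightarrow> Z \<inter> C \<noteq> {}" for C
    using finite_subset[OF ZX fin] by (simp add: k_def subcomponents_def card_gt_0_iff)
  have "component E X ` Z = {C \<in> K. Z \<inter> C \<noteq> {}}"
  proof
    show "component E X ` Z \<subseteq> {C \<in> K. Z \<inter> C \<noteq> {}}"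
      using ZX component_self[of _ E X] by (auto simp: K_def)
    show "{C \<in> K. Z \<inter> C \<noteq> {}} \<subseteq> component E X ` Z"
    proof
      fix C assume C: "C \<in> {C \<in> K. Z \<inter> C \<noteq> {}}"
      then obtain w where "w \<in> Z" "w \<in> C"
        by blast
      moreover have "component E X w = C"
        using C \<open>w \<in> C\<close> component_eq_of_mem[of C E X w] by (simp add: K_def)
      ultimately show "C \<in> component E X ` Z"
        by blast
    qed
  qed
  then have card_meet: "card (component E X ` Z) = card {C \<in> K. 0 < k C}"
    using k_pos by simp
  have "int (card {C \<in> K. 0 < k C}) = (\<Sum>C\<in>{C \<in> K. 0 < k C}. 1)"
    by simp
  also have "\<dots> = (\<Sum>C\<in>K. if 0 < k C then 1 else 0)"
    using finK by (rule sum.inter_filter)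
  finally have count_nonzero: "int (card {C \<in> K. 0 < k C}) = (\<Sum>C\<in>K. if 0 < k C then 1 else 0)" .
  have "(\<Sum>C\<in>K. \<bar>int (k C) - 1\<bar>) = (\<Sum>C\<in>K. 1 + int (k C) - 2 * (if 0 < k C then 1 else 0))"
    by (rule sum.cong) auto
  also have "\<dots> = int (card K) + (\<Sum>C\<in>K. int (k C)) - 2 * int (card {C \<in> K. 0 < k C})"
    by (simp add: sum.distrib sum_subtractf sum_distrib_left[symmetric] count_nonzero[symmetric])
  finally show ?thesis
    using card_meet card_components_eq_sum_subcomponents[OF fin ZX, of E]
    by (simp add: h0_rank_def K_def k_def)
qed

lemma component_eq_singleton_if_no_non_cut_vertex:
  assumes fin: "finite X" and u: "u \<in> X" and disj: "component E X u \<inter> Z = {}"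
    and no_cut: "\<forall>x\<in>X - Z. \<not> joins_one_component E (X - {x}) x"
  shows "component E X u = {u}"
proof (rule ccontr)
  assume "component E X u \<noteq> {u}"
  moreover have "{u} \<subseteq> component E X u" "{u} \<subseteq> component E {u} u"
    by (simp_all add: component_self)
  ultimately obtain x where x: "x \<in> component E X u - {u}" "joins_one_component E (X - {x}) x"
    using exists_non_cut_vertex[OF fin u, of "{u}" E u "{u}"] u by auto
  moreover have "x \<in> X - Z"
    using x component_subset[OF u] disj by auto
  ultimately show False
    using no_cut by blast
qed

lemma exists_merging_vertex:
  assumes u: "u \<in> X - Z" and meet: "component E X u \<inter> Z \<noteq> {}"
    and no_join: "\<forall>v\<in>X - Z. \<not> joins_one_component E Z v"
  shows "\<exists>v\<in>component E X u - Z. \<exists>w1\<in>Z. \<exists>w2\<in>Z.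
           {v, w1} \<in> E \<and> {v, w2} \<in> E \<and> component E Z w1 \<noteq> component E Z w2"
proof -
  obtain z0 where z0: "z0 \<in> component E X u" "z0 \<in> Z"
    using meet by blast
  then have "(u, z0) \<in> (induced_adj E X)\<^sup>*"
    by (simp add: component_def)
  then obtain v w where vw: "(u, v) \<in> (induced_adj E X)\<^sup>*" "(v, w) \<in> induced_adj E X" "v \<notin> Z" "w \<in> Z"
    using rtrancl_enters[of u z0 "induced_adj E X" Z] u z0(2) by blast
  then have v: "v \<in> component E X u - Z" "v \<in> X" "{v, w} \<in> E"
    by (auto simp: component_def induced_adj_def)
  then have "\<not> joins_one_component E Z v"
    using no_join by blast
  then show ?thesis
    using v vw(3,4) unfolding joins_one_component_def by blast
qed

lemma card_subcomponents_ne_1: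
  assumes fin: "finite X" and ZX: "Z \<subseteq> X" and u: "u \<in> X - Z"
    and no_join: "\<forall>v\<in>X - Z. \<not> joins_one_component E Z v"
  shows "card (subcomponents E Z (component E X u)) \<noteq> 1"
proof (cases "component E X u \<inter> Z = {}")
  case True
  then have "Z \<inter> component E X u = {}"
    by blast
  then show ?thesis
    by (simp add: subcomponents_def)
next
  case False
  then obtain v w1 w2 where v: "v \<in> component E X u - Z" and w: "w1 \<in> Z" "w2 \<in> Z"
    and edges: "{v, w1} \<in> E" "{v, w2} \<in> E" and ne: "component E Z w1 \<noteq> component E Z w2"
    using exists_merging_vertex[OF u False no_join] by blast
  have "v \<in> X"
    using v component_subset[of u X E] u by blast
  then have "w1 \<in> component E X u" "w2 \<in> component E X u"
    using v w edges ZX by (auto intro: component_edge)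
  then have "{component E Z w1, component E Z w2} \<subseteq> subcomponents E Z (component E X u)"
    using w by (simp add: subcomponents_def)
  moreover have "finite (subcomponents E Z (component E X u))"
    using finite_subset[OF ZX fin] by (simp add: subcomponents_def)
  ultimately have "card {component E Z w1, component E Z w2} \<le> card (subcomponents E Z (component E X u))"
    by (rule card_mono[rotated])
  then have "2 \<le> card (subcomponents E Z (component E X u))"
    using ne by simp
  then show ?thesis
    by simp
qed

lemma exists_non_cut_vertex_if_two_subcomponents:
  assumes fin: "finite X" and ZX: "Z \<subseteq> X"
    and u: "u1 \<in> X - Z" "u2 \<in> component E X u1 - Z" "u1 \<noteq> u2"
    and v: "v \<in> component E X u1" and w: "w1 \<in> Z" "w2 \<in> Z" and edges: "{v, w1} \<in> E" "{v, w2} \<in> E"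
    and ZC: "Z \<inter> component E X u1 \<subseteq> component E Z w1 \<union> component E Z w2"
  shows "\<exists>x\<in>X - Z. joins_one_component E (X - {x}) x"
proof -
  define C where "C = component E X u1"
  define R0 where "R0 = insert v (component E Z w1 \<union> component E Z w2)"
  have "v \<in> X"
    using v component_subset[of u1 X E] u by auto
  then have wC: "w1 \<in> C" "w2 \<in> C"
    using v w edges ZX component_edge[of v E X u1] by (auto simp: C_def)
  have "component E Z w \<subseteq> C" if "w \<in> C" for w
    using component_mono[OF ZX, of E w] component_eq[of w E X u1] that by (simp add: C_def)
  then have R0_C: "R0 \<subseteq> C"
    using v wC by (simp add: R0_def C_def)
  have "component E Z w \<subseteq> Z" if "w \<in> Z" for w
    using component_subset[OF that] .
  then have "u1 \<notin> R0 \<or> u2 \<notin> R0"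
    using u w by (auto simp: R0_def)
  then have C_R0: "C \<noteq> R0"
    using u component_self[of u1 E X] by (auto simp: C_def)
  have "component E Z w \<subseteq> component E (insert v Z) v" if "w \<in> Z" "{v, w} \<in> E" for w
  proof -
    have "w \<in> component E (insert v Z) v"
      using that component_self[of v E "insert v Z"] component_edge[of v E "insert v Z" v w] by simp
    then have "component E (insert v Z) w = component E (insert v Z) v"
      by (rule component_eq)
    then show ?thesis
      using component_mono[OF subset_insertI[of Z v], of E w] by simp
  qed
  then have R0_conn: "R0 \<subseteq> component E (insert v Z) v"
    using w edges component_self[of v E "insert v Z"] by (simp add: R0_def)
  have vZ: "insert v Z \<subseteq> X" "insert v Z \<inter> (C - R0) = {}"
    using \<open>v \<in> X\<close> ZX ZC by (auto simp: R0_def C_def)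
  have "\<exists>x\<in>C - R0. joins_one_component E (X - {x}) x"
    using exists_non_cut_vertex[OF fin _ _ _ _ R0_conn vZ[unfolded C_def]] u(1) R0_C C_R0
    by (simp add: C_def R0_def)
  moreover have "C - R0 \<subseteq> X - Z"
    using ZC component_subset[of u1 X E] u by (auto simp: C_def R0_def)
  ultimately show ?thesis
    by blast
qed

lemma card_subcomponents_ge_3:
  assumes fin: "finite X" and ZX: "Z \<subseteq> X"
    and u: "u1 \<in> X - Z" "u2 \<in> component E X u1 - Z" "u1 \<noteq> u2"
    and no_cut: "\<forall>x\<in>X - Z. \<not> joins_one_component E (X - {x}) x"
    and no_join: "\<forall>v\<in>X - Z. \<not> joins_one_component E Z v"
  shows "3 \<le> card (subcomponents E Z (component E X u1))"
proof (rule ccontr)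
  define C where "C = component E X u1"
  assume "\<not> 3 \<le> card (subcomponents E Z C)"
  then have few: "card (subcomponents E Z C) \<le> 2"
    by (simp add: C_def)
  have "component E X u1 \<inter> Z \<noteq> {}"
  proof
    assume "component E X u1 \<inter> Z = {}"
    then have "component E X u1 = {u1}"
      using u(1) by (intro component_eq_singleton_if_no_non_cut_vertex[OF fin _ _ no_cut]) auto
    then show False
      using u(2,3) by simp
  qed
  then have "\<exists>v\<in>C - Z. \<exists>w1\<in>Z. \<exists>w2\<in>Z.
      {v, w1} \<in> E \<and> {v, w2} \<in> E \<and> component E Z w1 \<noteq> component E Z w2"
    unfolding C_def by (rule exists_merging_vertex[OF u(1) _ no_join])
  then obtain v w1 w2 where v: "v \<in> C - Z" and w: "w1 \<in> Z" "w2 \<in> Z"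
    and edges: "{v, w1} \<in> E" "{v, w2} \<in> E" and ne: "component E Z w1 \<noteq> component E Z w2"
    by blast
  have "v \<in> X"
    using v component_subset[of u1 X E] u by (auto simp: C_def)
  then have "w1 \<in> C" "w2 \<in> C"
    using v w edges ZX component_edge[of v E X u1] by (auto simp: C_def)
  then have "{component E Z w1, component E Z w2} \<subseteq> subcomponents E Z C"
    using w by (simp add: subcomponents_def)
  moreover have "finite (subcomponents E Z C)"
    using finite_subset[OF ZX fin] by (simp add: subcomponents_def)
  ultimately have sub_eq: "subcomponents E Z C = {component E Z w1, component E Z w2}"
    using few ne by (intro card_seteq[symmetric]) simp_all
  have "Z \<inter> C \<subseteq> component E Z w1 \<union> component E Z w2"
  proof
    fix w assume "w \<in> Z \<inter> C"
    then have "component E Z w \<in> {component E Z w1, component E Z w2}"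
      using sub_eq unfolding subcomponents_def by blast
    then show "w \<in> component E Z w1 \<union> component E Z w2"
      using component_self[of w E Z] by auto
  qed
  then show False
    using exists_non_cut_vertex_if_two_subcomponents[OF fin ZX u _ w edges] v no_cut
    by (auto simp: C_def)
qed

lemma exists_joining_vertex:
  assumes fin: "finite X" and ZX: "Z \<subseteq> X"
    and u: "u1 \<in> X - Z" "u2 \<in> X - Z" "u1 \<noteq> u2"
    and few: "(h0_rank E X X - h0_rank E Z X) + (h0_rank E Z Z - h0_rank E Z X) \<le> 1"
  shows "\<exists>v\<in>X - Z. joins_one_component E (X - {v}) v \<or> joins_one_component E Z v"
proof (rule ccontr)
  assume "\<not> ?thesis"
  then have no_cut: "\<forall>x\<in>X - Z. \<not> joins_one_component E (X - {x}) x"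
    and no_join: "\<forall>v\<in>X - Z. \<not> joins_one_component E Z v"
    by auto
  define K where "K = component E X ` X"
  define defect where "defect C = \<bar>int (card (subcomponents E Z C)) - 1\<bar>" for C
  have "finite K"
    using fin by (simp add: K_def)
  have K: "component E X u1 \<in> K" "component E X u2 \<in> K"
    using u by (auto simp: K_def)
  have defect_ge_1: "1 \<le> defect (component E X u)" if "u \<in> X - Z" for u
    using card_subcomponents_ne_1[OF fin ZX that no_join] by (simp add: defect_def)
  have "2 \<le> (\<Sum>C\<in>K. defect C)"
  proof (cases "component E X u1 = component E X u2")
    case True
    then have "u2 \<in> component E X u1 - Z"
      using u(2) component_self[of u2 E X] by simp
    then have "2 \<le> defect (component E X u1)"
      using card_subcomponents_ge_3[OF fin ZX u(1) _ u(3) no_cut no_join] by (simp add: defect_def)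
    also have "\<dots> \<le> (\<Sum>C\<in>K. defect C)"
      using \<open>finite K\<close> K(1) by (intro member_le_sum) (simp_all add: defect_def)
    finally show ?thesis .
  next
    case False
    have "2 \<le> (\<Sum>C\<in>{component E X u1, component E X u2}. defect C)"
      using False defect_ge_1[OF u(1)] defect_ge_1[OF u(2)] by simp
    also have "\<dots> \<le> (\<Sum>C\<in>K. defect C)"
      using \<open>finite K\<close> K by (intro sum_mono2) (simp_all add: defect_def)
    finally show ?thesis .
  qed
  moreover have "(\<Sum>C\<in>K. defect C) \<le> 1"
    using few births_plus_deaths_eq[OF fin ZX, of E] by (simp add: K_def defect_def)
  ultimately show False
    by simp
qed

abbreviation sublevel :: "nat set \<Rightarrow> (nat \<Rightarrow> real) \<Rightarrow> real \<Rightarrow> nat set" where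
  "sublevel V z r \<equiv> sub_V V z (\<lambda>x. x \<le> r)"

abbreviation strict_sublevel :: "nat set \<Rightarrow> (nat \<Rightarrow> real) \<Rightarrow> real \<Rightarrow> nat set" where
  "strict_sublevel V z r \<equiv> sub_V V z (\<lambda>x. x < r)"

lemma rk_eq_h0_rank:
  assumes "\<Union>E \<subseteq> V"
  shows "rk V E z P Q = h0_rank E (sub_V V z P) (sub_V V z Q)"
proof -
  have "{(a, b). {a, b} \<in> sub_E E z Q} = induced_adj E (sub_V V z Q)"
    using assms by (auto simp: sub_E_def sub_V_def induced_adj_def)
  then have "comp E z Q = component E (sub_V V z Q)"
    by (simp add: fun_eq_iff comp_def component_def)
  then show ?thesis
    by (simp add: rk_def h0_rank_def)
qed

lemma mult_fin_eq:
  assumes "\<Union>E \<subseteq> V"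
  shows "mult_fin V E z b d =
      h0_rank E (sublevel V z b) (strict_sublevel V z d) - h0_rank E (strict_sublevel V z b) (strict_sublevel V z d)
    - h0_rank E (sublevel V z b) (sublevel V z d) + h0_rank E (strict_sublevel V z b) (sublevel V z d)"
  by (simp add: mult_fin_def rk_eq_h0_rank[OF assms])

lemma mult_inf_eq:
  assumes "\<Union>E \<subseteq> V"
  shows "mult_inf V E z b = h0_rank E (sublevel V z b) V - h0_rank E (strict_sublevel V z b) V"
  by (simp add: mult_inf_def rk_eq_h0_rank[OF assms] sub_V_def)

lemma diag_coords_empty: "diag_coords {#} = {#}"
  by (simp add: diag_coords_def)

lemma diag_coords_add: "diag_coords (A + B) = diag_coords A + diag_coords B"
  by (simp add: diag_coords_def)

lemma diag_coords_sum: "diag_coords (\<Sum>s\<in>S. f s) = (\<Sum>s\<in>S. diag_coords (f s))"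
  by (induction S rule: infinite_finite_induct) (simp_all add: diag_coords_def)

lemma count_diag_coords_replicate_fin:
  "count (diag_coords (replicate_mset n (b, ereal d))) t = n * (of_bool (b = t) + of_bool (d = t))"
  by (induction n) (auto simp: diag_coords_def)

lemma count_diag_coords_replicate_inf:
  "count (diag_coords (replicate_mset n (b, \<infinity>))) t = n * of_bool (b = t)"
  by (induction n) (auto simp: diag_coords_def)

lemma count_diag_coords_PH0:
  assumes fin: "finite V" and t: "t \<in> z ` V"
  shows "count (diag_coords (PH0 V E z)) t =
      (\<Sum>d\<in>{d \<in> z ` V. t < d}. nat (mult_fin V E z t d)) + nat (mult_inf V E z t)
    + (\<Sum>b\<in>{b \<in> z ` V. b < t}. nat (mult_fin V E z b t))"
proof -
  define S where "S = z ` V"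
  define m where "m b d = nat (mult_fin V E z b d)" for b d
  define F where "F b d = (if b < d then replicate_mset (m b d) (b, ereal d) else {#})" for b d
  have finS: "finite S" and tS: "t \<in> S"
    using fin t by (simp_all add: S_def)
  have pair: "count (diag_coords (F b d)) t
      = (if b = t \<and> t < d then m b d else 0) + (if d = t \<and> b < t then m b d else 0)" for b d
    by (auto simp: F_def count_diag_coords_replicate_fin diag_coords_empty)
  have "(\<Sum>b\<in>S. \<Sum>d\<in>S. if b = t \<and> t < d then m b d else 0)
      = (\<Sum>b\<in>S. if b = t then (\<Sum>d\<in>S. if t < d then m t d else 0) else 0)"
    by (rule sum.cong) auto
  also have "\<dots> = (\<Sum>d\<in>{d \<in> S. t < d}. m t d)"
    using finS tS by (simp add: sum.inter_filter)
  finally have births: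
    "(\<Sum>b\<in>S. \<Sum>d\<in>S. if b = t \<and> t < d then m b d else 0) = (\<Sum>d\<in>{d \<in> S. t < d}. m t d)" .
  have "(\<Sum>b\<in>S. \<Sum>d\<in>S. if d = t \<and> b < t then m b d else 0)
      = (\<Sum>b\<in>S. if b < t then m b t else 0)"
  proof (rule sum.cong)
    show "(\<Sum>d\<in>S. if d = t \<and> b < t then m b d else 0) = (if b < t then m b t else 0)" for b
      using finS tS by (cases "b < t") simp_all
  qed simp
  also have "\<dots> = (\<Sum>b\<in>{b \<in> S. b < t}. m b t)"
    using finS by (simp add: sum.inter_filter)
  finally have deaths:
    "(\<Sum>b\<in>S. \<Sum>d\<in>S. if d = t \<and> b < t then m b d else 0) = (\<Sum>b\<in>{b \<in> S. b < t}. m b t)" .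
  have essential: "(\<Sum>b\<in>S. count (diag_coords (replicate_mset (nat (mult_inf V E z b)) (b, \<infinity>))) t)
      = nat (mult_inf V E z t)"
    using finS tS by (simp add: count_diag_coords_replicate_inf)
  have "count (diag_coords (PH0 V E z)) t = (\<Sum>b\<in>S. \<Sum>d\<in>S. count (diag_coords (F b d)) t)
      + (\<Sum>b\<in>S. count (diag_coords (replicate_mset (nat (mult_inf V E z b)) (b, \<infinity>))) t)"
    unfolding PH0_def diag_coords_add diag_coords_sum count_union count_sum S_def F_def m_def by simp
  also have "\<dots> = (\<Sum>d\<in>{d \<in> S. t < d}. m t d) + nat (mult_inf V E z t) + (\<Sum>b\<in>{b \<in> S. b < t}. m b t)"
    unfolding pair sum.distrib births deaths essential by simp
  finally show ?thesis
    by (simp add: S_def m_def)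
qed

lemma sum_telescope_Max:
  fixes \<phi> :: "'a::linorder \<Rightarrow> 'b::ab_group_add"
  assumes "finite F" "\<forall>d\<in>F. s < d"
  shows "(\<Sum>d\<in>F. \<phi> (Max (insert s {x \<in> F. x < d})) - \<phi> d) = \<phi> s - \<phi> (Max (insert s F))"
  using assms
proof (induction F rule: finite_linorder_max_induct)
  case empty
  then show ?case by simp
next
  case (insert b A)
  have "(\<Sum>d\<in>A. \<phi> (Max (insert s {x \<in> insert b A. x < d})) - \<phi> d)
      = (\<Sum>d\<in>A. \<phi> (Max (insert s {x \<in> A. x < d})) - \<phi> d)"
  proof (rule sum.cong)
    fix d assume "d \<in> A"
    then have "{x \<in> insert b A. x < d} = {x \<in> A. x < d}"
      using insert.hyps(2) by auto
    then show "\<phi> (Max (insert s {x \<in> insert b A. x < d})) - \<phi> d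
        = \<phi> (Max (insert s {x \<in> A. x < d})) - \<phi> d"
      by simp
  qed simp
  moreover have "{x \<in> insert b A. x < b} = A"
    using insert.hyps(2) by auto
  moreover have "Max (insert s (insert b A)) = b"
    using insert by (intro Max_eqI) auto
  moreover have "b \<notin> A"
    using insert.hyps(2) by blast
  ultimately show ?case
    using insert by simp
qed

lemma strict_sublevel_eq_sublevel_Max:
  assumes "finite F" "s < d" "\<forall>u\<in>V. z u < d \<longrightarrow> z u \<le> s \<or> z u \<in> F"
  shows "strict_sublevel V z d = sublevel V z (Max (insert s {x \<in> F. x < d}))"
proof -
  have fin: "finite (insert s {x \<in> F. x < d})"
    using assms(1) by simp
  have "Max (insert s {x \<in> F. x < d}) < d"
    using fin assms(2) by (subst Max_less_iff) auto
  moreover have "z u \<le> Max (insert s {x \<in> F. x < d})" if "u \<in> V" "z u < d" for u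
  proof -
    have "z u \<le> s \<or> z u \<in> {x \<in> F. x < d}"
      using assms(3) that by auto
    moreover have "s \<le> Max (insert s {x \<in> F. x < d})"
      using fin by (rule Max_ge) simp
    moreover have "z u \<le> Max (insert s {x \<in> F. x < d})" if "z u \<in> {x \<in> F. x < d}"
      using fin that by (rule Max_ge[OF _ insertI2])
    ultimately show ?thesis
      by linarith
  qed
  ultimately show ?thesis
    by (auto simp: sub_V_def)
qed

lemma sum_mult_fin_births:
  assumes fin: "finite V" and edges: "\<Union>E \<subseteq> V"
  shows "(\<Sum>d\<in>{d \<in> z ` V. t < d}. mult_fin V E z t d) + mult_inf V E z t
       = h0_rank E (sublevel V z t) (sublevel V z t) - h0_rank E (strict_sublevel V z t) (sublevel V z t)"
proof -
  define F where "F = {d \<in> z ` V. t < d}"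
  define \<phi> where "\<phi> r = h0_rank E (sublevel V z t) (sublevel V z r)
    - h0_rank E (strict_sublevel V z t) (sublevel V z r)" for r
  define M where "M = Max (insert t F)"
  have finF: "finite F" and above: "\<forall>d\<in>F. t < d"
    using fin by (simp_all add: F_def)
  have z_cases: "\<forall>u\<in>V. z u \<le> t \<or> z u \<in> F"
    by (auto simp: F_def)
  have "strict_sublevel V z d = sublevel V z (Max (insert t {x \<in> F. x < d}))" if "d \<in> F" for d
    using that above z_cases by (intro strict_sublevel_eq_sublevel_Max[OF finF]) auto
  then have "mult_fin V E z t d = \<phi> (Max (insert t {x \<in> F. x < d})) - \<phi> d" if "d \<in> F" for d
    using that by (simp add: mult_fin_eq[OF edges] \<phi>_def)
  then have "(\<Sum>d\<in>F. mult_fin V E z t d) = \<phi> t - \<phi> M"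
    using sum_telescope_Max[OF finF above, of \<phi>] by (simp add: M_def)
  moreover have "z u \<le> M" if "u \<in> V" for u
  proof -
    have "t \<le> M" "\<forall>d\<in>F. d \<le> M"
      using finF by (simp_all add: M_def)
    then show ?thesis
      using z_cases that by fastforce
  qed
  then have "sublevel V z M = V"
    by (auto simp: sub_V_def)
  then have "mult_inf V E z t = \<phi> M"
    by (simp add: mult_inf_eq[OF edges] \<phi>_def)
  ultimately show ?thesis
    by (simp add: F_def \<phi>_def)
qed

lemma sum_mult_fin_deaths:
  assumes fin: "finite V" and edges: "\<Union>E \<subseteq> V"
  shows "(\<Sum>b\<in>{b \<in> z ` V. b < t}. mult_fin V E z b t)
       = h0_rank E (strict_sublevel V z t) (strict_sublevel V z t)
       - h0_rank E (strict_sublevel V z t) (sublevel V z t)"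
proof -
  define F where "F = {b \<in> z ` V. b < t}"
  define s where "s = Min (insert t (z ` V)) - 1"
  have "Min (insert t (z ` V)) \<le> t" "\<forall>u\<in>V. Min (insert t (z ` V)) \<le> z u"
    using fin by simp_all
  then have s: "s < t" "\<forall>u\<in>V. s < z u"
    by (auto simp: s_def)
  define \<psi> where "\<psi> r = h0_rank E (sublevel V z r) (strict_sublevel V z t)
    - h0_rank E (sublevel V z r) (sublevel V z t)" for r
  define M where "M = Max (insert s F)"
  have finF: "finite F" and above: "\<forall>b\<in>F. s < b"
    using fin s by (auto simp: F_def)
  have z_cases: "\<forall>u\<in>V. z u < t \<longrightarrow> z u \<le> s \<or> z u \<in> F"
    by (auto simp: F_def)
  have "strict_sublevel V z b = sublevel V z (Max (insert s {x \<in> F. x < b}))" if "b \<in> F" for b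
    using that above z_cases by (intro strict_sublevel_eq_sublevel_Max[OF finF]) (auto simp: F_def)
  then have "mult_fin V E z b t = - (\<psi> (Max (insert s {x \<in> F. x < b})) - \<psi> b)" if "b \<in> F" for b
    using that by (simp add: mult_fin_eq[OF edges] \<psi>_def)
  then have "(\<Sum>b\<in>F. mult_fin V E z b t) = - (\<Sum>b\<in>F. \<psi> (Max (insert s {x \<in> F. x < b})) - \<psi> b)"
    by (simp add: sum_subtractf)
  then have "(\<Sum>b\<in>F. mult_fin V E z b t) = \<psi> M - \<psi> s"
    using sum_telescope_Max[OF finF above, of \<psi>] by (simp add: M_def)
  moreover have "sublevel V z M = strict_sublevel V z t"
    using strict_sublevel_eq_sublevel_Max[OF finF s(1) z_cases] by (simp add: M_def F_def)
  moreover have "sublevel V z s = {}"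
    using s(2) by (auto simp: sub_V_def)
  ultimately show ?thesis
    by (simp add: F_def \<psi>_def h0_rank_def)
qed

lemma births_plus_deaths_le_count:
  assumes fin: "finite V" and edges: "\<Union>E \<subseteq> V" and t: "t \<in> z ` V"
  shows "(h0_rank E (sublevel V z t) (sublevel V z t) - h0_rank E (strict_sublevel V z t) (sublevel V z t))
       + (h0_rank E (strict_sublevel V z t) (strict_sublevel V z t)
          - h0_rank E (strict_sublevel V z t) (sublevel V z t))
       \<le> int (count (diag_coords (PH0 V E z)) t)"
proof -
  have nat_sum: "(\<Sum>x\<in>A. f x) \<le> int (\<Sum>x\<in>A. nat (f x))" for f :: "real \<Rightarrow> int" and A
    by (simp add: sum_mono)
  have "mult_inf V E z t \<le> int (nat (mult_inf V E z t))"
    by simp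
  then show ?thesis
    unfolding sum_mult_fin_births[OF fin edges, symmetric] sum_mult_fin_deaths[OF fin edges, symmetric]
      count_diag_coords_PH0[OF fin t] of_nat_add
    using nat_sum[of "mult_fin V E z t" "{d \<in> z ` V. t < d}"]
      nat_sum[of "\<lambda>b. mult_fin V E z b t" "{b \<in> z ` V. b < t}"] by linarith
qed

lemma image_fun_upd_tied:
  assumes "v \<in> V" "w \<in> V" "w \<noteq> v" "z w = z v"
  shows "(z(v := t)) ` V = insert t (z ` V)"
proof -
  have "z ` V = z ` (V - {v})"
    using assms by (auto simp: image_iff) (metis Diff_iff singletonD)
  then show ?thesis
    using assms(1) by (auto simp: image_iff)
qed

lemma sub_V_fun_upd_same: "P t = P (z v) \<Longrightarrow> sub_V V (z(v := t)) P = sub_V V z P"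
  by (auto simp: sub_V_def)

lemma mult_fin_eq_up_to_insert:
  assumes edges: "\<Union>E \<subseteq> V" and join: "joins_one_component E W v" and "b < d"
    and b: "eq_up_to_insert W v (sublevel V z b) (sublevel V z' b)"
      "eq_up_to_insert W v (strict_sublevel V z b) (strict_sublevel V z' b)"
    and d: "eq_up_to_insert W v (sublevel V z d) (sublevel V z' d)"
      "eq_up_to_insert W v (strict_sublevel V z d) (strict_sublevel V z' d)"
  shows "mult_fin V E z' b d = mult_fin V E z b d"
proof -
  have sub: "sublevel V y b \<subseteq> strict_sublevel V y d" "strict_sublevel V y b \<subseteq> strict_sublevel V y d"
    "sublevel V y b \<subseteq> sublevel V y d" "strict_sublevel V y b \<subseteq> sublevel V y d" for y
    using \<open>b < d\<close> by (auto simp: sub_V_def)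
  note eq = h0_rank_eq_up_to_insert[OF join sub(1) sub(1)] h0_rank_eq_up_to_insert[OF join sub(2) sub(2)]
    h0_rank_eq_up_to_insert[OF join sub(3) sub(3)] h0_rank_eq_up_to_insert[OF join sub(4) sub(4)]
  show ?thesis
    unfolding mult_fin_eq[OF edges] using eq(1)[OF b(1) d(2)] eq(2)[OF b(2) d(2)] eq(3)[OF b(1) d(1)] eq(4)[OF b(2) d(1)]
    by simp
qed

lemma mult_inf_eq_up_to_insert:
  assumes edges: "\<Union>E \<subseteq> V" and join: "joins_one_component E W v"
    and b: "eq_up_to_insert W v (sublevel V z b) (sublevel V z' b)"
      "eq_up_to_insert W v (strict_sublevel V z b) (strict_sublevel V z' b)"
  shows "mult_inf V E z' b = mult_inf V E z b"
proof -
  have sub: "sub_V V y P \<subseteq> V" for y P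
    by (auto simp: sub_V_def)
  have "eq_up_to_insert W v V V"
    by (simp add: eq_up_to_insert_def)
  then show ?thesis
    unfolding mult_inf_eq[OF edges]
    using h0_rank_eq_up_to_insert[OF join sub sub b(1)] h0_rank_eq_up_to_insert[OF join sub sub b(2)]
    by simp
qed

lemma sublevels_fun_upd_eq_up_to_insert:
  assumes new: "t \<notin> z ` V" and gap: "\<forall>u\<in>V. \<not> (min (z v) t < z u \<and> z u < max (z v) t)"
    and r: "r \<in> z ` V"
  defines "W \<equiv> strict_sublevel V (z(v := t)) t"
  shows "eq_up_to_insert W v (sublevel V z r) (sublevel V (z(v := t)) r)"
    and "eq_up_to_insert W v (strict_sublevel V z r) (strict_sublevel V (z(v := t)) r)"
proof -
  have W: "W = {u \<in> V. u \<noteq> v \<and> z u < t}"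
    by (auto simp: W_def sub_V_def)
  show "eq_up_to_insert W v (sublevel V z r) (sublevel V (z(v := t)) r)"
  proof (cases "z v < t \<and> r = z v")
    case True
    then have "{u \<in> V. u \<noteq> v \<and> z u \<le> r} = W"
      using new gap W by force
    then have "sublevel V z r \<in> {W, insert v W}" "sublevel V (z(v := t)) r = W"
      using True by (auto simp: sub_V_def)
    then show ?thesis
      by (simp add: eq_up_to_insert_def)
  next
    case False
    then have "(t \<le> r) = (z v \<le> r)"
      using new gap r by force
    then show ?thesis
      by (simp add: eq_up_to_insert_def sub_V_fun_upd_same)
  qed
  show "eq_up_to_insert W v (strict_sublevel V z r) (strict_sublevel V (z(v := t)) r)"
  proof (cases "t < z v \<and> r = z v")
    case True
    then have "{u \<in> V. u \<noteq> v \<and> z u < r} = W"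
      using new gap W by force
    then have "strict_sublevel V z r = W" "strict_sublevel V (z(v := t)) r \<in> {W, insert v W}"
      using True by (auto simp: sub_V_def)
    then show ?thesis
      by (simp add: eq_up_to_insert_def)
  next
    case False
    then have "(t < r) = (z v < r)"
      using new gap r by force
    then show ?thesis
      by (simp add: eq_up_to_insert_def sub_V_fun_upd_same)
  qed
qed

lemma mults_vanish_at_joining_level:
  assumes edges: "\<Union>E \<subseteq> V" and level: "sublevel V z t = insert v (strict_sublevel V z t)"
    and join: "joins_one_component E (strict_sublevel V z t) v"
  shows "t < d \<Longrightarrow> mult_fin V E z t d = 0"
    and "b < t \<Longrightarrow> mult_fin V E z b t = 0"
    and "mult_inf V E z t = 0"
proof -
  note left = h0_rank_insert_left[OF join, folded level]
    and right = h0_rank_insert_right[OF join, folded level]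
  show "mult_fin V E z t d = 0" if "t < d"
  proof -
    have "sublevel V z t \<subseteq> strict_sublevel V z d" "sublevel V z t \<subseteq> sublevel V z d"
      using that by (auto simp: sub_V_def)
    then show ?thesis
      by (simp add: mult_fin_eq[OF edges] left)
  qed
  show "mult_fin V E z b t = 0" if "b < t"
  proof -
    have "sublevel V z b \<subseteq> strict_sublevel V z t" "strict_sublevel V z b \<subseteq> strict_sublevel V z t"
      using that by (auto simp: sub_V_def)
    then show ?thesis
      by (simp add: mult_fin_eq[OF edges] right)
  qed
  have "sublevel V z t \<subseteq> V"
    by (auto simp: sub_V_def)
  then show "mult_inf V E z t = 0"
    by (simp add: mult_inf_eq[OF edges] left)
qed

lemma PH0_eq_if_new_value_silent:
  assumes fin: "finite V" and img: "z' ` V = insert t (z ` V)" and new: "t \<notin> z ` V"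
    and fin_eq: "\<And>b d. b \<in> z ` V \<Longrightarrow> d \<in> z ` V \<Longrightarrow> b < d \<Longrightarrow> mult_fin V E z' b d = mult_fin V E z b d"
    and inf_eq: "\<And>b. b \<in> z ` V \<Longrightarrow> mult_inf V E z' b = mult_inf V E z b"
    and silent: "\<And>d. d \<in> z ` V \<Longrightarrow> t < d \<Longrightarrow> mult_fin V E z' t d \<le> 0"
      "\<And>b. b \<in> z ` V \<Longrightarrow> b < t \<Longrightarrow> mult_fin V E z' b t \<le> 0"
      "mult_inf V E z' t \<le> 0"
  shows "PH0 V E z' = PH0 V E z"
proof -
  define S where "S = z ` V"
  define F where "F y b d = (if b < d then replicate_mset (nat (mult_fin V E y b d)) (b, ereal d) else {#})"
    for y b d
  define G where "G y b = replicate_mset (nat (mult_inf V E y b)) (b, PInfty)" for y b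
  have PH0_y: "PH0 V E y = (\<Sum>b\<in>y ` V. \<Sum>d\<in>y ` V. F y b d) + (\<Sum>b\<in>y ` V. G y b)" for y
    unfolding PH0_def F_def G_def ..
  have finS: "finite S" and tS: "t \<notin> S"
    using fin new by (simp_all add: S_def)
  have "F z' t d = {#}" if "d \<in> insert t S" for d
    using that silent(1) by (auto simp: F_def S_def)
  then have row: "(\<Sum>d\<in>insert t S. F z' t d) = {#}"
    by simp
  have "(\<Sum>d\<in>insert t S. F z' b d) = (\<Sum>d\<in>S. F z b d)" if "b \<in> S" for b
  proof -
    have "F z' b t = {#}"
      using that silent(2) by (auto simp: F_def S_def)
    moreover have "F z' b d = F z b d" if "d \<in> S" for d
      using \<open>b \<in> S\<close> that fin_eq by (simp add: F_def S_def)
    ultimately show ?thesis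
      using finS tS by simp
  qed
  then have fin_part: "(\<Sum>b\<in>insert t S. \<Sum>d\<in>insert t S. F z' b d) = (\<Sum>b\<in>S. \<Sum>d\<in>S. F z b d)"
    using finS tS row by simp
  have "G z' t = {#}" "\<And>b. b \<in> S \<Longrightarrow> G z' b = G z b"
    using silent(3) inf_eq by (simp_all add: G_def S_def)
  then have inf_part: "(\<Sum>b\<in>insert t S. G z' b) = (\<Sum>b\<in>S. G z b)"
    using finS tS by simp
  show ?thesis
    unfolding PH0_y img S_def[symmetric] fin_part inf_part ..
qed

lemma PH0_fun_upd_tied:
  assumes fin: "finite V" and edges: "\<Union>E \<subseteq> V" and v: "v \<in> V"
    and w: "w \<in> V" "w \<noteq> v" "z w = z v"
    and new: "t \<notin> z ` V" and gap: "\<forall>u\<in>V. \<not> (min (z v) t < z u \<and> z u < max (z v) t)"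
    and join: "joins_one_component E (strict_sublevel V (z(v := t)) t) v"
  shows "PH0 V E (z(v := t)) = PH0 V E z"
proof (rule PH0_eq_if_new_value_silent[OF fin image_fun_upd_tied[OF v w] new])
  note close = sublevels_fun_upd_eq_up_to_insert[OF new gap]
  show "mult_fin V E (z(v := t)) b d = mult_fin V E z b d"
    if "b \<in> z ` V" "d \<in> z ` V" "b < d" for b d
    using mult_fin_eq_up_to_insert[OF edges join that(3) close[OF that(1)] close[OF that(2)]] .
  show "mult_inf V E (z(v := t)) b = mult_inf V E z b" if "b \<in> z ` V" for b
    using mult_inf_eq_up_to_insert[OF edges join close[OF that]] .
  have "sublevel V (z(v := t)) t = insert v (strict_sublevel V (z(v := t)) t)"
    using v new by (auto simp: sub_V_def)
  note silent = mults_vanish_at_joining_level[OF edges this join]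
  show "mult_fin V E (z(v := t)) t d \<le> 0" if "t < d" for d
    using silent(1)[OF that] by simp
  show "mult_fin V E (z(v := t)) b t \<le> 0" if "b < t" for b
    using silent(2)[OF that] by simp
  show "mult_inf V E (z(v := t)) t \<le> 0"
    using silent(3) by simp
qed

lemma exists_tied_joining_vertex:
  assumes fin: "finite V" and edges: "\<Union>E \<subseteq> V"
    and typical: "typical_diagram (PH0 V E z)" and tie: "\<not> inj_on z V"
  shows "\<exists>v\<in>V. \<exists>w\<in>V. w \<noteq> v \<and> z w = z v \<and>
           (joins_one_component E (sublevel V z (z v) - {v}) v \<or>
            joins_one_component E (strict_sublevel V z (z v)) v)"
proof -
  obtain a b where ab: "a \<in> V" "b \<in> V" "a \<noteq> b" "z a = z b"
    using tie by (auto simp: inj_on_def)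
  define t where "t = z a"
  define X where "X = sublevel V z t"
  define Z where "Z = strict_sublevel V z t"
  have "int (count (diag_coords (PH0 V E z)) t) \<le> 1"
    using typical by (simp add: typical_diagram_def)
  then have few: "(h0_rank E X X - h0_rank E Z X) + (h0_rank E Z Z - h0_rank E Z X) \<le> 1"
    using births_plus_deaths_le_count[OF fin edges, of t z] ab(1) by (simp add: X_def Z_def t_def)
  have "finite X" "Z \<subseteq> X" "a \<in> X - Z" "b \<in> X - Z"
    using fin ab by (auto simp: X_def Z_def t_def sub_V_def)
  then obtain v where v: "v \<in> X - Z"
    and joins: "joins_one_component E (X - {v}) v \<or> joins_one_component E Z v"
    using exists_joining_vertex[OF _ _ _ _ ab(3) few] by blast
  then have "v \<in> V" "z v = t"
    by (auto simp: X_def Z_def sub_V_def)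
  moreover have "\<exists>w\<in>V. w \<noteq> v \<and> z w = z v"
    using ab \<open>z v = t\<close> by (metis t_def)
  ultimately show ?thesis
    using joins by (auto simp: X_def Z_def)
qed

lemma fresh_value_near:
  fixes z :: "'a \<Rightarrow> real"
  assumes far: "\<forall>u\<in>V. z u = s \<or> \<delta> \<le> \<bar>z u - s\<bar>" and t: "0 < \<bar>t - s\<bar>" "\<bar>t - s\<bar> < \<delta>"
  shows "t \<notin> z ` V" and "\<forall>u\<in>V. \<not> (min s t < z u \<and> z u < max s t)"
proof -
  show "t \<notin> z ` V"
  proof
    assume "t \<in> z ` V"
    then obtain u where "u \<in> V" "z u = t"
      by blast
    then have "t = s \<or> \<delta> \<le> \<bar>t - s\<bar>"
      using far by blast
    with t show False
      by auto
  qed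
  show "\<forall>u\<in>V. \<not> (min s t < z u \<and> z u < max s t)"
    using far t by (auto simp: abs_if split: if_splits)
qed

lemma exists_PH0_eq_more_values:
  assumes fin: "finite V" and edges: "\<Union>E \<subseteq> V"
    and typical: "typical_diagram (PH0 V E z)" and tie: "\<not> inj_on z V"
  shows "\<exists>z'. PH0 V E z' = PH0 V E z \<and> card (z' ` V) = Suc (card (z ` V))"
proof -
  obtain v w where v: "v \<in> V" and w: "w \<in> V" "w \<noteq> v" "z w = z v"
    and joins: "joins_one_component E (sublevel V z (z v) - {v}) v \<or>
                joins_one_component E (strict_sublevel V z (z v)) v"
    using exists_tied_joining_vertex[OF assms] by blast
  obtain \<delta> :: real where "\<delta> > 0" and "\<forall>x\<in>z ` V. x \<noteq> z v \<longrightarrow> \<delta> \<le> dist (z v) x"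
    using finite_set_avoid[of "z ` V" "z v"] fin by blast
  then have far: "\<forall>u\<in>V. z u = z v \<or> \<delta> \<le> \<bar>z u - z v\<bar>"
    by (auto simp: dist_real_def abs_minus_commute)
  have move: "\<exists>z'. PH0 V E z' = PH0 V E z \<and> card (z' ` V) = Suc (card (z ` V))"
    if "\<bar>t - z v\<bar> = \<delta> / 2" and join: "joins_one_component E (strict_sublevel V (z(v := t)) t) v" for t
  proof -
    have "0 < \<bar>t - z v\<bar>" "\<bar>t - z v\<bar> < \<delta>"
      using that(1) \<open>\<delta> > 0\<close> by linarith+
    note fresh = fresh_value_near[OF far this]
    have "PH0 V E (z(v := t)) = PH0 V E z"
      by (rule PH0_fun_upd_tied[OF fin edges v w fresh join])
    moreover have "card ((z(v := t)) ` V) = Suc (card (z ` V))"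
      using image_fun_upd_tied[OF v w] fresh(1) fin by simp
    ultimately show ?thesis
      by blast
  qed
  from joins show ?thesis
  proof
    assume "joins_one_component E (sublevel V z (z v) - {v}) v"
    moreover have "strict_sublevel V (z(v := z v + \<delta> / 2)) (z v + \<delta> / 2) = sublevel V z (z v) - {v}"
      using far \<open>\<delta> > 0\<close> by (force simp: sub_V_def)
    ultimately show ?thesis
      using move[of "z v + \<delta> / 2"] \<open>\<delta> > 0\<close> by simp
  next
    assume "joins_one_component E (strict_sublevel V z (z v)) v"
    moreover have "strict_sublevel V (z(v := z v - \<delta> / 2)) (z v - \<delta> / 2) = strict_sublevel V z (z v)"
      using far \<open>\<delta> > 0\<close> by (force simp: sub_V_def)
    ultimately show ?thesis
      using move[of "z v - \<delta> / 2"] \<open>\<delta> > 0\<close> by simp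
  qed
qed

lemma exists_injective_with_same_PH0:
  assumes fin: "finite V" and edges: "\<Union>E \<subseteq> V" and "typical_diagram (PH0 V E z)"
  shows "\<exists>z'. inj_on z' V \<and> PH0 V E z' = PH0 V E z"
  using assms(3)
proof (induction "card V - card (z ` V)" arbitrary: z rule: less_induct)
  case less
  show ?case
  proof (cases "inj_on z V")
    case False
    then obtain z' where z': "PH0 V E z' = PH0 V E z" "card (z' ` V) = Suc (card (z ` V))"
      using exists_PH0_eq_more_values[OF fin edges less.prems] by blast
    have "card (z ` V) < card V"
      using False fin card_image_le[OF fin, of z] by (simp add: inj_on_iff_eq_card)
    then have "card V - card (z' ` V) < card V - card (z ` V)"
      using z'(2) by simp
    then show ?thesis
      using less.hyps less.prems z'(1) by metis
  qed blast
qed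

lemma edges_subset_ngon_or_starlike:
  assumes "is_ngon N E \<or> is_starlike N E"
  shows "\<Union>E \<subseteq> {1..N}"
  using assms
proof
  assume "is_ngon N E"
  then show ?thesis
    by (auto simp: is_ngon_def ngon_edges_def)
next
  assume "is_starlike N E"
  then obtain c bs where c: "c \<in> {1..N}" and V: "{1..N} = insert c (\<Union>b\<in>set bs. set b)"
    and E: "E = (\<Union>b\<in>set bs. branch_edges c b)"
    unfolding is_starlike_def by blast
  have "e \<subseteq> {1..N}" if b: "b \<in> set bs" and e: "e \<in> branch_edges c b" for b e
  proof -
    obtain x y where xy: "(x, y) \<in> set (zip (c # b) b)" "e = {x, y}"
      using e by (auto simp: branch_edges_def)
    then have "x \<in> set (c # b)" "y \<in> set b"
      by (auto dest: set_zip_leftD set_zip_rightD)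
    then show ?thesis
      using V c b xy(2) by auto
  qed
  then show ?thesis
    using E by blast
qed

theorem lemma1p1:
  fixes N :: nat and E :: "nat set set" and z :: "nat \<Rightarrow> real"
  assumes "is_ngon N E \<or> is_starlike N E"
    and "typical_diagram (PH0 {1..N} E z)"
  shows "\<exists>z' :: nat \<Rightarrow> real. typical_point N z' \<and> PH0 {1..N} E z' = PH0 {1..N} E z"
  using exists_injective_with_same_PH0[OF _ edges_subset_ngon_or_starlike[OF assms(1)] assms(2)]
  by (simp add: typical_point_def)

end
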